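(* Let $T_e=\{0,6,10,28,36,66,78,\dots\}$ be the set of even triangular numbers and $T_o=\{1,3,15,21,45,55,\dots\}$ the set of odd triangular numbers (a triangular number is an integer of the form $k(k+1)/2$ with $k\ge 0$ an integer). Then for every even integer $n\geq 1$, $$\sum_{t\in T_e,\ t\le n} p\!\left(\frac{n-t}{2}\right)=p_d(n),$$ and for every odd integer $n\geq 1$, $$\sum_{t\in T_o,\ t\le n} p\!\left(\frac{n-t}{2}\right)=p_o(n).$$
   Context: $p(n)$ is the number of partitions of $n$ (with $p(0)=1$), $p_d(n)$ is the number of partitions of $n$ into distinct parts, and $p_o(n)$ is the number of partitions of $n$ into odd parts. In the sums, each triangular number is counted once. *)

theory Defs
  imports Main "HOL-Library.Multiset"
begin

definition partitions :: "nat \<Rightarrow> nat multiset set" where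
  "partitions n = {M. (\<forall>x\<in>#M. 0 < x) \<and> sum_mset M = n}"

definition p :: "nat \<Rightarrow> nat" where
  "p n = card (partitions n)"

definition p_d :: "nat \<Rightarrow> nat" where
  "p_d n = card {M \<in> partitions n. \<forall>x. count M x \<le> 1}"

definition p_o :: "nat \<Rightarrow> nat" where
  "p_o n = card {M \<in> partitions n. \<forall>x\<in>#M. odd x}"

definition triangular :: "nat \<Rightarrow> bool" where
  "triangular t \<longleftrightarrow> (\<exists>k::nat. t = k * (k + 1) div 2)"

end

theory Submission
  imports Defs "HOL-Computational_Algebra.Formal_Power_Series"
begin

unbundle fps_syntax

(*
  Both identities come from the polynomial identity
    (1 + x)(1 + x^2)...(1 + x^N) = sum_{k=0}^{N} x^(k(k+1)/2) [N, floor((N-k)/2)]_(x^2),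
  where [N, a]_q is the Gaussian binomial coefficient; it is proved by induction on N,
  pairing the terms of index k and k + 1 for which N - k is even.  For n <= N the coefficient
  of x^n on the left is p_d(n).  On the right, [N, a]_(x^2) only has even powers of x, and
  its coefficient of x^(2m) counts the partitions of m into at most N - a parts of size at
  most a, which is p(m) as long as m <= a and m <= N - a.  A term therefore contributes
  p((n - t)/2) with t = k(k+1)/2 exactly when t <= n and t has the parity of n.  For odd n
  Euler's theorem p_o = p_d, again a finite product identity, finishes the proof.
*)

section \<open>Partitions with parts in a given set\<close>

definition partitions_into :: "nat set \<Rightarrow> nat \<Rightarrow> nat multiset set" where
  "partitions_into A n = {M. set_mset M \<subseteq> A \<and> sum_mset M = n}"

definition distinct_partitions_into :: "nat set \<Rightarrow> nat \<Rightarrow> nat multiset set" where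
  "distinct_partitions_into A n = {M \<in> partitions_into A n. \<forall>x. count M x \<le> 1}"

lemma mset_member_le_sum_mset: "(x::nat) \<in># M \<Longrightarrow> x \<le> sum_mset M"
  by (metis le_add1 multi_member_split sum_mset.add_mset)

lemma size_le_sum_mset: "0 \<notin># M \<Longrightarrow> size M \<le> sum_mset (M :: nat multiset)"
  by (induction M) auto

lemma finite_partitions_into:
  assumes "0 \<notin> A"
  shows "finite (partitions_into A n)"
proof (rule finite_subset)
  show "partitions_into A n \<subseteq> (\<Union>s\<le>n. multisets_of_size {..n} s)"
  proof
    fix M assume M: "M \<in> partitions_into A n"
    then have "set_mset M \<subseteq> {..n}" "size M \<le> n"
      using assms mset_member_le_sum_mset size_le_sum_mset unfolding partitions_into_def by auto
    then show "M \<in> (\<Union>s\<le>n. multisets_of_size {..n} s)"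
      unfolding multisets_of_size_def by auto
  qed
qed auto

lemma finite_distinct_partitions_into: "0 \<notin> A \<Longrightarrow> finite (distinct_partitions_into A n)"
  using finite_partitions_into unfolding distinct_partitions_into_def by auto

lemma partitions_into_insert_large:
  assumes "n < j"
  shows "partitions_into (insert j A) n = partitions_into A n"
proof -
  have "j \<notin># M" if "sum_mset M = n" for M
    using that assms mset_member_le_sum_mset by fastforce
  then show ?thesis unfolding partitions_into_def by blast
qed

lemma distinct_partitions_into_insert_large:
  "n < j \<Longrightarrow> distinct_partitions_into (insert j A) n = distinct_partitions_into A n"
  unfolding distinct_partitions_into_def using partitions_into_insert_large by simp

lemma partitions_into_insert:
  assumes "j \<notin> A" "j \<le> n"
  shows "partitions_into (insert j A) n
           = partitions_into A n \<union> add_mset j ` partitions_into (insert j A) (n - j)"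
proof (intro equalityI subsetI)
  fix M assume M: "M \<in> partitions_into (insert j A) n"
  show "M \<in> partitions_into A n \<union> add_mset j ` partitions_into (insert j A) (n - j)"
  proof (cases "j \<in># M")
    case True
    then obtain M' where "M = add_mset j M'" by (meson multi_member_split)
    with M have "M' \<in> partitions_into (insert j A) (n - j)"
      unfolding partitions_into_def by auto
    with \<open>M = add_mset j M'\<close> show ?thesis by blast
  next
    case False
    with M show ?thesis unfolding partitions_into_def by auto
  qed
next
  fix M assume "M \<in> partitions_into A n \<union> add_mset j ` partitions_into (insert j A) (n - j)"
  with assms(2) show "M \<in> partitions_into (insert j A) n"
    unfolding partitions_into_def by auto
qed

lemma distinct_partitions_into_insert:
  assumes "j \<notin> A" "j \<le> n"
  shows "distinct_partitions_into (insert j A) n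
           = distinct_partitions_into A n \<union> add_mset j ` distinct_partitions_into A (n - j)"
proof (intro equalityI subsetI)
  fix M assume M: "M \<in> distinct_partitions_into (insert j A) n"
  then have sum: "sum_mset M = n" and parts: "set_mset M \<subseteq> insert j A"
    and single: "\<And>x. count M x \<le> 1"
    unfolding distinct_partitions_into_def partitions_into_def by auto
  show "M \<in> distinct_partitions_into A n \<union> add_mset j ` distinct_partitions_into A (n - j)"
  proof (cases "j \<in># M")
    case True
    then obtain M' where M': "M = add_mset j M'" by (meson multi_member_split)
    have "count M' x \<le> 1" for x
      using single[of x] unfolding M' by (cases "x = j") auto
    moreover have "j \<notin># M'"
      using single[of j] unfolding M' by (simp add: count_eq_zero_iff[symmetric])
    ultimately have "M' \<in> distinct_partitions_into A (n - j)"
      using sum parts unfolding M' distinct_partitions_into_def partitions_into_def by auto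
    with M' show ?thesis by blast
  next
    case False
    with sum parts single show ?thesis
      unfolding distinct_partitions_into_def partitions_into_def by auto
  qed
next
  fix M assume "M \<in> distinct_partitions_into A n \<union> add_mset j ` distinct_partitions_into A (n - j)"
  then consider "M \<in> distinct_partitions_into A n"
    | M' where "M = add_mset j M'" "M' \<in> distinct_partitions_into A (n - j)" by blast
  then show "M \<in> distinct_partitions_into (insert j A) n"
  proof cases
    case 1
    then show ?thesis unfolding distinct_partitions_into_def partitions_into_def by auto
  next
    case (2 M')
    with assms(1) have "count M' j = 0"
      unfolding distinct_partitions_into_def partitions_into_def by (auto simp: count_eq_zero_iff)
    with 2 assms(2) show ?thesis
      unfolding distinct_partitions_into_def partitions_into_def by auto
  qed
qed

lemma card_partitions_into_insert:
  assumes "j \<notin> A" "0 \<notin> A" "0 < j"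
  shows "card (partitions_into (insert j A) n)
           = card (partitions_into A n)
             + (if j \<le> n then card (partitions_into (insert j A) (n - j)) else 0)"
proof (cases "j \<le> n")
  case True
  have "j \<notin># M" if "M \<in> partitions_into A n" for M
    using that assms(1) unfolding partitions_into_def by blast
  moreover have "j \<in># M" if "M \<in> add_mset j ` partitions_into (insert j A) (n - j)" for M
    using that by auto
  ultimately have disj:
    "partitions_into A n \<inter> add_mset j ` partitions_into (insert j A) (n - j) = {}"
    by blast
  have fin: "finite (partitions_into A n)" "finite (partitions_into (insert j A) (n - j))"
    using assms finite_partitions_into by auto
  have "card (add_mset j ` partitions_into (insert j A) (n - j))
          = card (partitions_into (insert j A) (n - j))"
    by (rule card_image) (simp add: inj_on_def)
  then show ?thesis
    using True card_Un_disjoint[OF fin(1) finite_imageI[OF fin(2)] disj]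
    unfolding partitions_into_insert[OF assms(1) True] by simp
qed (simp add: partitions_into_insert_large)

lemma card_distinct_partitions_into_insert:
  assumes "j \<notin> A" "0 \<notin> A"
  shows "card (distinct_partitions_into (insert j A) n)
           = card (distinct_partitions_into A n)
             + (if j \<le> n then card (distinct_partitions_into A (n - j)) else 0)"
proof (cases "j \<le> n")
  case True
  have "j \<notin># M" if "M \<in> distinct_partitions_into A n" for M
    using that assms(1) unfolding distinct_partitions_into_def partitions_into_def by blast
  moreover have "j \<in># M" if "M \<in> add_mset j ` distinct_partitions_into A (n - j)" for M
    using that by auto
  ultimately have disj:
    "distinct_partitions_into A n \<inter> add_mset j ` distinct_partitions_into A (n - j) = {}"
    by blast
  have fin: "finite (distinct_partitions_into A n)" "finite (distinct_partitions_into A (n - j))"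
    using assms finite_distinct_partitions_into by auto
  have "card (add_mset j ` distinct_partitions_into A (n - j))
          = card (distinct_partitions_into A (n - j))"
    by (rule card_image) (simp add: inj_on_def)
  then show ?thesis
    using True card_Un_disjoint[OF fin(1) finite_imageI[OF fin(2)] disj]
    unfolding distinct_partitions_into_insert[OF assms(1) True] by simp
qed (simp add: distinct_partitions_into_insert_large)

lemma partitions_into_0:
  assumes "0 \<notin> A"
  shows "partitions_into A 0 = {{#}}"
proof (intro equalityI subsetI)
  fix M assume M: "M \<in> partitions_into A 0"
  have "x \<notin># M" for x
    using M assms mset_member_le_sum_mset[of x M] unfolding partitions_into_def by auto
  then show "M \<in> {{#}}" by (metis all_not_in_conv set_mset_eq_empty_iff singletonI)
qed (simp add: partitions_into_def)

lemma partitions_into_empty: "partitions_into {} n = (if n = 0 then {{#}} else {})"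
  unfolding partitions_into_def by auto

lemma distinct_partitions_into_empty:
  "distinct_partitions_into {} n = (if n = 0 then {{#}} else {})"
  unfolding distinct_partitions_into_def partitions_into_empty by auto

section \<open>Generating functions\<close>

definition partition_fps :: "nat set \<Rightarrow> int fps" where
  "partition_fps A = Abs_fps (\<lambda>n. int (card (partitions_into A n)))"

definition distinct_partition_fps :: "nat set \<Rightarrow> int fps" where
  "distinct_partition_fps A = Abs_fps (\<lambda>n. int (card (distinct_partitions_into A n)))"

lemma partition_fps_insert:
  assumes "j \<notin> A" "0 \<notin> A" "0 < j"
  shows "partition_fps (insert j A) = partition_fps A + fps_X ^ j * partition_fps (insert j A)"
proof (rule fps_ext)
  fix n
  show "partition_fps (insert j A) $ n = (partition_fps A + fps_X ^ j * partition_fps (insert j A)) $ n"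
    using card_partitions_into_insert[OF assms, of n]
    by (simp add: partition_fps_def fps_X_power_mult_nth)
qed

lemma distinct_partition_fps_insert:
  assumes "j \<notin> A" "0 \<notin> A"
  shows "distinct_partition_fps (insert j A) = distinct_partition_fps A * (1 + fps_X ^ j)"
proof (rule fps_ext)
  fix n
  show "distinct_partition_fps (insert j A) $ n = (distinct_partition_fps A * (1 + fps_X ^ j)) $ n"
    using card_distinct_partitions_into_insert[OF assms, of n]
    by (simp add: distinct_partition_fps_def distrib_left fps_X_power_mult_right_nth)
qed

lemma partition_fps_times_prod:
  "finite A \<Longrightarrow> 0 \<notin> A \<Longrightarrow> partition_fps A * (\<Prod>j\<in>A. 1 - fps_X ^ j) = 1"
proof (induction A rule: finite_induct)
  case empty
  show ?case by (rule fps_ext) (simp add: partition_fps_def partitions_into_empty)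
next
  case (insert j A)
  then have "partition_fps (insert j A) * (1 - fps_X ^ j) = partition_fps A"
    using partition_fps_insert[of j A] by (simp add: algebra_simps)
  with insert show ?case by (simp add: mult.assoc[symmetric])
qed

lemma distinct_partition_fps_eq_prod:
  "finite A \<Longrightarrow> 0 \<notin> A \<Longrightarrow> distinct_partition_fps A = (\<Prod>j\<in>A. 1 + fps_X ^ j)"
proof (induction A rule: finite_induct)
  case empty
  show ?case
    by (rule fps_ext)
      (simp add: distinct_partition_fps_def distinct_partitions_into_empty)
next
  case (insert j A)
  then show ?case by (simp add: distinct_partition_fps_insert mult.commute)
qed

lemma partition_fps_nth_0: "0 \<notin> A \<Longrightarrow> partition_fps A $ 0 = 1"
  by (simp add: partition_fps_def partitions_into_0)

lemma partition_fps_nth_atLeastAtMost_Suc: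
  "partition_fps {1..Suc a} $ m
     = partition_fps {1..a} $ m + (if Suc a \<le> m then partition_fps {1..Suc a} $ (m - Suc a) else 0)"
proof -
  have "{1..Suc a} = insert (Suc a) {1..a}" by auto
  then have "partition_fps {1..Suc a} = partition_fps {1..a} + fps_X ^ Suc a * partition_fps {1..Suc a}"
    by (simp only:) (rule partition_fps_insert; simp)
  from arg_cong[where f = "\<lambda>f. f $ m", OF this] show ?thesis
    unfolding fps_add_nth fps_X_power_mult_nth by (simp add: not_less)
qed

lemma partitions_eq_partitions_into:
  assumes "n \<le> a"
  shows "partitions n = partitions_into {1..a} n"
proof -
  have "(\<forall>x\<in>#M. 0 < x) \<longleftrightarrow> set_mset M \<subseteq> {1..a}" if "sum_mset M = n" for M
    using that assms mset_member_le_sum_mset[of _ M] by fastforce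
  then show ?thesis unfolding partitions_def partitions_into_def by blast
qed

lemma p_eq_partition_fps_nth: "n \<le> a \<Longrightarrow> int (p n) = partition_fps {1..a} $ n"
  by (simp add: p_def partition_fps_def partitions_eq_partitions_into)

lemma p_d_eq_prod_nth: "n \<le> a \<Longrightarrow> int (p_d n) = (\<Prod>j=1..a. 1 + fps_X ^ j) $ n"
  by (simp add: p_d_def distinct_partition_fps_eq_prod[symmetric] distinct_partition_fps_def
      distinct_partitions_into_def partitions_eq_partitions_into)

lemma p_o_eq_partition_fps_nth:
  assumes "n \<le> a"
  shows "int (p_o n) = partition_fps {k \<in> {1..a}. odd k} $ n"
proof -
  have "{M \<in> partitions n. \<forall>x\<in>#M. odd x} = partitions_into {k \<in> {1..a}. odd k} n"
    unfolding partitions_eq_partitions_into[OF assms] partitions_into_def by blast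
  then show ?thesis by (simp add: p_o_def partition_fps_def)
qed

section \<open>Gaussian binomial coefficients\<close>

definition q_pochhammer :: "'a::comm_ring_1 \<Rightarrow> nat \<Rightarrow> 'a" where
  "q_pochhammer q n = (\<Prod>k=1..n. 1 - q ^ k)"

lemma q_pochhammer_0 [simp]: "q_pochhammer q 0 = 1"
  by (simp add: q_pochhammer_def)

lemma q_pochhammer_Suc: "q_pochhammer q (Suc n) = q_pochhammer q n * (1 - q ^ Suc n)"
  by (simp add: q_pochhammer_def)

lemma q_pochhammer_dvd: "k \<le> n \<Longrightarrow> q_pochhammer q k dvd q_pochhammer q n"
  unfolding q_pochhammer_def by (rule prod_dvd_prod_subset) auto

lemma q_pochhammer_X_power_ne_0:
  assumes "0 < d"
  shows "q_pochhammer (fps_X ^ d :: 'a::idom fps) n \<noteq> 0"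
proof -
  have "(1 - (fps_X ^ d) ^ k :: 'a fps) \<noteq> 0" if "1 \<le> k" for k
  proof -
    have "(1 - fps_X ^ (d * k) :: 'a fps) $ 0 = 1"
      using assms that by simp
    then have "(1 - (fps_X ^ d) ^ k :: 'a fps) $ 0 = 1"
      by (simp only: power_mult)
    then show ?thesis by (metis fps_zero_nth zero_neq_one)
  qed
  then show ?thesis unfolding q_pochhammer_def by (simp add: prod_zero_iff)
qed

fun q_binomial :: "'a::comm_ring_1 \<Rightarrow> nat \<Rightarrow> nat \<Rightarrow> 'a" where
  "q_binomial q n 0 = 1"
| "q_binomial q 0 (Suc j) = 0"
| "q_binomial q (Suc n) (Suc j) = q_binomial q n j + q ^ Suc j * q_binomial q n (Suc j)"

lemma q_binomial_eq_0: "n < j \<Longrightarrow> q_binomial q n j = 0"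
  by (induction q n j rule: q_binomial.induct) auto

lemma q_binomial_self [simp]: "q_binomial q n n = 1"
  by (induction n) (auto simp: q_binomial_eq_0)

lemma q_binomial_q_pochhammer:
  "j \<le> n \<Longrightarrow> q_binomial q n j * q_pochhammer q j * q_pochhammer q (n - j) = q_pochhammer q n"
proof (induction n arbitrary: j)
  case (Suc n)
  show ?case
  proof (cases j)
    case (Suc i)
    with Suc.prems have "i \<le> n" by simp
    have "q_binomial q n i * q_pochhammer q (Suc i) * q_pochhammer q (n - i)
            = q_binomial q n i * q_pochhammer q i * q_pochhammer q (n - i) * (1 - q ^ Suc i)"
      by (simp only: q_pochhammer_Suc ac_simps)
    then have first: "q_binomial q n i * q_pochhammer q (Suc i) * q_pochhammer q (n - i)
                        = q_pochhammer q n * (1 - q ^ Suc i)"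
      using Suc.IH[OF \<open>i \<le> n\<close>] by simp
    have second: "q ^ Suc i * q_binomial q n (Suc i) * q_pochhammer q (Suc i) * q_pochhammer q (n - i)
                    = q_pochhammer q n * (q ^ Suc i - q ^ Suc n)"
    proof (cases "i = n")
      case False
      with \<open>i \<le> n\<close> have "Suc i \<le> n" by simp
      then have "n - i = Suc (n - Suc i)" by simp
      then have "q ^ Suc i * q_binomial q n (Suc i) * q_pochhammer q (Suc i) * q_pochhammer q (n - i)
                   = q ^ Suc i * (1 - q ^ (n - i))
                     * (q_binomial q n (Suc i) * q_pochhammer q (Suc i) * q_pochhammer q (n - Suc i))"
        by (simp only: q_pochhammer_Suc ac_simps)
      also have "\<dots> = q_pochhammer q n * (q ^ Suc i - q ^ Suc i * q ^ (n - i))"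
        using Suc.IH[OF \<open>Suc i \<le> n\<close>] by (simp add: algebra_simps)
      also have "q ^ Suc i * q ^ (n - i) = q ^ Suc n"
        using \<open>i \<le> n\<close> by (simp add: mult.assoc flip: power_add)
      finally show ?thesis .
    qed (simp add: q_binomial_eq_0)
    have "q_binomial q (Suc n) j * q_pochhammer q j * q_pochhammer q (Suc n - j)
            = q_binomial q n i * q_pochhammer q (Suc i) * q_pochhammer q (n - i)
              + q ^ Suc i * q_binomial q n (Suc i) * q_pochhammer q (Suc i) * q_pochhammer q (n - i)"
      by (simp add: Suc algebra_simps)
    also have "\<dots> = q_pochhammer q (Suc n)"
      unfolding first second by (simp add: q_pochhammer_Suc algebra_simps)
    finally show ?thesis .
  qed simp
qed simp

lemma q_binomial_symmetric:
  fixes q :: "'a::idom"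
  assumes "q_pochhammer q n \<noteq> 0" "j \<le> n"
  shows "q_binomial q n (n - j) = q_binomial q n j"
proof -
  have "q_pochhammer q j * q_pochhammer q (n - j) \<noteq> 0"
    using assms q_pochhammer_dvd[of j n q] q_pochhammer_dvd[of "n - j" n q] by auto
  moreover have "q_binomial q n (n - j) * (q_pochhammer q j * q_pochhammer q (n - j))
                   = q_binomial q n j * (q_pochhammer q j * q_pochhammer q (n - j))"
    using q_binomial_q_pochhammer[of j n q] q_binomial_q_pochhammer[of "n - j" n q] assms(2)
    by (simp add: ac_simps)
  ultimately show ?thesis by simp
qed

lemma q_binomial_Suc_Suc_dual:
  fixes q :: "'a::idom"
  assumes "q_pochhammer q (Suc n) \<noteq> 0" "i \<le> n"
  shows "q_binomial q (Suc n) (Suc i) = q_binomial q n (Suc i) + q ^ (n - i) * q_binomial q n i"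
proof (cases "i = n")
  case False
  then obtain l where l: "n - i = Suc l" "n - Suc i = l"
    using assms(2) by (metis Suc_diff_Suc diff_Suc_Suc le_neq_implies_less)
  have "q_pochhammer q n \<noteq> 0"
    using assms(1) q_pochhammer_dvd[of n "Suc n" q] by auto
  have "q_binomial q (Suc n) (Suc i) = q_binomial q (Suc n) (Suc l)"
    using q_binomial_symmetric[OF assms(1), of "Suc i"] assms(2) l by simp
  also have "\<dots> = q_binomial q n l + q ^ Suc l * q_binomial q n (Suc l)" by simp
  also have "q_binomial q n l = q_binomial q n (Suc i)"
    using q_binomial_symmetric[OF \<open>q_pochhammer q n \<noteq> 0\<close>, of "Suc i"] l by simp
  also have "q_binomial q n (Suc l) = q_binomial q n i"
    using q_binomial_symmetric[OF \<open>q_pochhammer q n \<noteq> 0\<close>, of i] assms(2) l by simp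
  finally show ?thesis using l by simp
qed (simp add: q_binomial_eq_0)

lemma q_binomial_X_power_nth_eq_0:
  "\<not> d dvd i \<Longrightarrow> q_binomial (fps_X ^ d :: 'a::comm_ring_1 fps) n j $ i = 0"
proof (induction n arbitrary: j i)
  case 0
  then have "i \<noteq> 0" by (metis dvd_0_right)
  then show ?case by (cases j) (auto intro: gr0I)
next
  case (Suc n)
  show ?case
  proof (cases j)
    case (Suc j')
    have "\<not> d dvd (i - d * Suc j')" if "d * Suc j' \<le> i"
      using Suc.prems that by (metis dvd_add dvd_triv_left le_add_diff_inverse2)
    then have "(fps_X ^ (d * Suc j') * q_binomial (fps_X ^ d) n (Suc j') :: 'a fps) $ i = 0"
      using Suc.IH by (simp add: fps_X_power_mult_nth)
    moreover have "(fps_X ^ d) ^ Suc j' = (fps_X ^ (d * Suc j') :: 'a fps)"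
      by (simp only: power_mult)
    ultimately show ?thesis
      using Suc.IH[OF Suc.prems] unfolding Suc q_binomial.simps(3) fps_add_nth by simp
  qed (use Suc.prems in \<open>auto intro: gr0I\<close>)
qed

(* The coefficient of x^(d m) counts the partitions of m into at most b parts of size at most a;
   for m <= b the bound on the number of parts is vacuous. *)
lemma q_binomial_X_power_nth_partition_fps:
  assumes "0 < d" "m \<le> b"
  shows "q_binomial (fps_X ^ d) (a + b) a $ (d * m) = partition_fps {1..a} $ m"
  using assms(2)
proof (induction a arbitrary: b m)
  case 0
  with assms(1) show ?case by (simp add: partition_fps_def partitions_into_empty)
next
  case (Suc a)
  note IH_a = Suc.IH
  show ?case using Suc.prems
  proof (induction b arbitrary: m)
    case 0
    then show ?case by (simp add: partition_fps_nth_0)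
  next
    case (Suc b)
    have split: "q_binomial (fps_X ^ d) (Suc a + Suc b) (Suc a)
        = q_binomial (fps_X ^ d) (a + Suc b) a
          + fps_X ^ (d * Suc a) * q_binomial (fps_X ^ d) (Suc a + b) (Suc a)"
      by (simp only: add_Suc add_Suc_right q_binomial.simps(3) power_mult)
    have lt: "d * m < d * Suc a \<longleftrightarrow> \<not> Suc a \<le> m" and
      diff: "d * m - d * Suc a = d * (m - Suc a)"
      using assms(1) by (simp_all only: mult_less_cancel1 diff_mult_distrib2) auto
    have "Suc a \<le> m \<Longrightarrow> q_binomial (fps_X ^ d) (Suc a + b) (Suc a) $ (d * (m - Suc a))
            = partition_fps {1..Suc a} $ (m - Suc a)"
      using Suc.IH Suc.prems by simp
    then have second: "(fps_X ^ (d * Suc a) * q_binomial (fps_X ^ d) (Suc a + b) (Suc a)) $ (d * m)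
                 = (if Suc a \<le> m then partition_fps {1..Suc a} $ (m - Suc a) else 0)"
      unfolding fps_X_power_mult_nth lt diff by simp
    have first: "q_binomial (fps_X ^ d) (a + Suc b) a $ (d * m) = partition_fps {1..a} $ m"
      using IH_a Suc.prems by blast
    show ?case
      unfolding split fps_add_nth first second partition_fps_nth_atLeastAtMost_Suc[of a m] ..
  qed
qed

section \<open>Euler's partition theorem\<close>

lemma q_pochhammer_add:
  "q_pochhammer q (m + n) = q_pochhammer q m * (\<Prod>k=Suc m..m + n. 1 - q ^ k)"
  unfolding q_pochhammer_def using prod.ub_add_nat[of 1 m _ n] by simp

lemma q_pochhammer_double:
  "q_pochhammer q (2 * n) = q_pochhammer (q ^ 2) n * (\<Prod>k\<in>{k\<in>{1..2 * n}. odd k}. 1 - q ^ k)"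
proof -
  have split: "{1..2 * n} = (\<lambda>k. 2 * k) ` {1..n} \<union> {k\<in>{1..2 * n}. odd k}"
  proof (intro equalityI subsetI)
    fix k assume k: "k \<in> {1..2 * n}"
    show "k \<in> (\<lambda>k. 2 * k) ` {1..n} \<union> {k\<in>{1..2 * n}. odd k}"
    proof (cases "even k")
      case True
      with k have "k = 2 * (k div 2)" "k div 2 \<in> {1..n}" by auto
      then show ?thesis by blast
    qed (use k in auto)
  qed auto
  have "(\<Prod>k\<in>(\<lambda>k. 2 * k) ` {1..n}. 1 - q ^ k) = q_pochhammer (q ^ 2) n"
    by (subst prod.reindex) (auto simp: inj_on_def q_pochhammer_def power_mult)
  moreover have "q_pochhammer q (2 * n)
                   = (\<Prod>k\<in>(\<lambda>k. 2 * k) ` {1..n} \<union> {k\<in>{1..2 * n}. odd k}. 1 - q ^ k)"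
    unfolding q_pochhammer_def by (rule arg_cong[where f = "prod (\<lambda>k. 1 - q ^ k)", OF split])
  ultimately show ?thesis by (subst (asm) prod.union_disjoint) auto
qed

lemma prod_one_plus_times_q_pochhammer:
  "(\<Prod>k=1..n. 1 + q ^ k) * q_pochhammer q n = q_pochhammer (q ^ 2) n"
proof -
  have "(1 + q ^ k) * (1 - q ^ k) = 1 - (q ^ 2) ^ k" for k
    by (simp add: power2_eq_square power_mult_distrib algebra_simps)
  then show ?thesis unfolding q_pochhammer_def prod.distrib[symmetric] by simp
qed

lemma prod_one_minus_X_power_mult_nth:
  fixes f :: "'a::comm_ring_1 fps"
  shows "finite K \<Longrightarrow> \<forall>k\<in>K. n < k \<Longrightarrow> ((\<Prod>k\<in>K. 1 - fps_X ^ k) * f) $ n = f $ n"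
proof (induction K rule: finite_induct)
  case (insert k K)
  have eq: "(\<Prod>k\<in>insert k K. 1 - fps_X ^ k) * f
          = (\<Prod>k\<in>K. 1 - fps_X ^ k) * f - fps_X ^ k * ((\<Prod>k\<in>K. 1 - fps_X ^ k) * f)"
    using insert.hyps by (simp add: left_diff_distrib mult.assoc)
  show ?case
    unfolding eq fps_sub_nth fps_X_power_mult_nth using insert by simp
qed simp

theorem p_o_eq_p_d: "p_o n = p_d n"
proof -
  \<comment> \<open>D Q = R, and R is 1 up to degree n, while F is the inverse of Q.\<close>
  define D :: "int fps" where "D = (\<Prod>k=1..n. 1 + fps_X ^ k)"
  define Q :: "int fps" where "Q = (\<Prod>k\<in>{k\<in>{1..2 * n}. odd k}. 1 - fps_X ^ k)"
  define R :: "int fps" where "R = (\<Prod>k=Suc n..n + n. 1 - fps_X ^ k)"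
  define P :: "int fps" where "P = q_pochhammer fps_X n"
  define F :: "int fps" where "F = partition_fps {k\<in>{1..2 * n}. odd k}"
  have "P * R = q_pochhammer fps_X (n + n)"
    unfolding P_def R_def by (rule q_pochhammer_add[symmetric])
  also have "\<dots> = q_pochhammer (fps_X ^ 2) n * Q"
    unfolding Q_def mult_2[symmetric] by (rule q_pochhammer_double)
  also have "q_pochhammer (fps_X ^ 2) n = D * P"
    unfolding D_def P_def by (rule prod_one_plus_times_q_pochhammer[symmetric])
  finally have "(D * Q) * P = R * P" by (simp only: ac_simps)
  moreover have "P \<noteq> 0"
    using q_pochhammer_X_power_ne_0[of 1 n] unfolding P_def by simp
  ultimately have DQ: "D * Q = R" by simp
  have "F * Q = 1"
    unfolding F_def Q_def by (rule partition_fps_times_prod) auto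
  then have "D = (D * Q) * F" by (simp only: ac_simps mult_1_right)
  also have "\<dots> = R * F" unfolding DQ ..
  finally have "int (p_d n) = (R * F) $ n"
    using p_d_eq_prod_nth[of n n] unfolding D_def by simp
  also have "\<dots> = F $ n"
    unfolding R_def by (rule prod_one_minus_X_power_mult_nth) auto
  also have "\<dots> = int (p_o n)"
    unfolding F_def by (rule p_o_eq_partition_fps_nth[symmetric]) simp
  finally show ?thesis by simp
qed

section \<open>The triangular expansion\<close>

definition tri :: "nat \<Rightarrow> nat" where
  "tri k = k * (k + 1) div 2"

lemma tri_0 [simp]: "tri 0 = 0"
  by (simp add: tri_def)

lemma tri_Suc: "tri (Suc k) = tri k + Suc k"
proof -
  have "Suc k * (Suc k + 1) = k * (k + 1) + 2 * Suc k" by (simp add: algebra_simps)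
  then show ?thesis unfolding tri_def by simp
qed

lemma le_tri: "k \<le> tri k"
  by (induction k) (auto simp: tri_Suc)

lemma strict_mono_tri: "strict_mono tri"
  unfolding strict_mono_Suc_iff by (simp add: tri_Suc)

lemma triangular_iff_in_range_tri: "triangular t \<longleftrightarrow> t \<in> range tri"
  unfolding triangular_def tri_def by auto

definition gauss_term :: "nat \<Rightarrow> nat \<Rightarrow> int fps" where
  "gauss_term N k = fps_X ^ tri k * q_binomial (fps_X ^ 2) N ((N - k) div 2)"

lemma gauss_term_Suc_even_gap:
  assumes "k < N" "even (N - k)"
  shows "gauss_term (Suc N) k = gauss_term N k + fps_X ^ Suc N * gauss_term N (Suc k)"
proof -
  from assms(2) obtain j where j: "N - k = 2 * j" by (rule evenE)
  with assms(1) obtain i where i: "N - k = 2 * Suc i" by (cases j) auto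
  then have div: "(Suc N - k) div 2 = Suc i" "(N - k) div 2 = Suc i" "(N - Suc k) div 2 = i"
    by simp_all
  have "i \<le> N" using i by simp
  have exp: "fps_X ^ tri k * (fps_X ^ 2) ^ (N - i) = (fps_X ^ Suc N * fps_X ^ tri (Suc k) :: int fps)"
  proof -
    have "tri k + 2 * (N - i) = Suc N + tri (Suc k)" using i by (simp add: tri_Suc)
    then show ?thesis by (simp only: power_add[symmetric] power_mult[symmetric])
  qed
  have ne: "q_pochhammer (fps_X ^ 2 :: int fps) (Suc N) \<noteq> 0"
    by (rule q_pochhammer_X_power_ne_0) simp
  have "gauss_term (Suc N) k
          = fps_X ^ tri k * q_binomial (fps_X ^ 2) N (Suc i)
            + (fps_X ^ tri k * (fps_X ^ 2) ^ (N - i)) * q_binomial (fps_X ^ 2) N i"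
    unfolding gauss_term_def div q_binomial_Suc_Suc_dual[OF ne \<open>i \<le> N\<close>]
    by (simp only: distrib_left mult.assoc)
  also have "\<dots> = gauss_term N k + fps_X ^ Suc N * gauss_term N (Suc k)"
    unfolding exp gauss_term_def div by (simp only: mult.assoc)
  finally show ?thesis .
qed

lemma gauss_term_Suc_odd_gap:
  assumes "odd (N - k)"
  shows "gauss_term (Suc N) k = gauss_term N k + fps_X ^ Suc N * gauss_term N (k - 1)"
proof -
  from assms obtain i where "N - k = 2 * i + 1" by (rule oddE)
  then have i: "N - k = Suc (2 * i)" by simp
  then have div: "(Suc N - k) div 2 = Suc i" "(N - k) div 2 = i" by simp_all
  have ne: "q_pochhammer (fps_X ^ 2 :: int fps) N \<noteq> 0"
    by (rule q_pochhammer_X_power_ne_0) simp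
  have shifted:
    "q_binomial (fps_X ^ 2 :: int fps) N ((N - (k - 1)) div 2) = q_binomial (fps_X ^ 2) N (Suc i)"
  proof (cases k)
    case 0
    with i have "i \<le> N" "N - i = Suc i" "(N - (k - 1)) div 2 = i" by simp_all
    have "q_binomial (fps_X ^ 2 :: int fps) N ((N - (k - 1)) div 2) = q_binomial (fps_X ^ 2) N (N - i)"
      unfolding \<open>(N - (k - 1)) div 2 = i\<close> by (rule q_binomial_symmetric[OF ne \<open>i \<le> N\<close>, symmetric])
    also have "\<dots> = q_binomial (fps_X ^ 2) N (Suc i)"
      using \<open>N - i = Suc i\<close> by (simp only:)
    finally show ?thesis .
  next
    case (Suc k')
    with i have "N - (k - 1) = 2 * Suc i" by arith
    then show ?thesis by simp
  qed
  have exp: "fps_X ^ tri k * (fps_X ^ 2) ^ Suc i = (fps_X ^ Suc N * fps_X ^ tri (k - 1) :: int fps)"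
  proof -
    have "tri k + 2 * Suc i = Suc N + tri (k - 1)" using i by (cases k) (simp_all add: tri_Suc)
    then show ?thesis by (simp only: power_add[symmetric] power_mult[symmetric])
  qed
  have "gauss_term (Suc N) k
          = fps_X ^ tri k * q_binomial (fps_X ^ 2) N i
            + (fps_X ^ tri k * (fps_X ^ 2) ^ Suc i) * q_binomial (fps_X ^ 2) N (Suc i)"
    unfolding gauss_term_def div by (simp only: q_binomial.simps(3) distrib_left mult.assoc)
  also have "\<dots> = gauss_term N k + fps_X ^ Suc N * gauss_term N (k - 1)"
    unfolding exp gauss_term_def div shifted by (simp only: mult.assoc)
  finally show ?thesis .
qed

(* For odd N the index 0 is a fixed point, because 0 - 1 = 0. *)
definition partner :: "nat \<Rightarrow> nat \<Rightarrow> nat" where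
  "partner N k = (if k = N then N else if even (N - k) then Suc k else k - 1)"

lemma partner_le: "k \<le> N \<Longrightarrow> partner N k \<le> N"
  unfolding partner_def by auto

lemma partner_partner:
  assumes "k \<le> N"
  shows "partner N (partner N k) = k"
proof -
  consider "k = N" | "k < N" "even (N - k)" | "odd (N - k)"
    using assms by fastforce
  then show ?thesis
  proof cases
    case 2
    then have "Suc k \<noteq> N" "odd (N - Suc k)" by presburger+
    with 2 show ?thesis by (simp add: partner_def)
  next
    case 3
    then have "k \<noteq> N" "k - 1 \<noteq> N" "k = 0 \<or> even (N - (k - 1))"
      using assms by presburger+
    with 3 show ?thesis by (auto simp: partner_def)
  qed (simp add: partner_def)
qed

lemma bij_betw_partner: "bij_betw (partner N) {..N} {..N}"
  by (rule bij_betw_byWitness[where f' = "partner N"]) (auto simp: partner_le partner_partner)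

lemma gauss_term_Suc:
  "k < N \<Longrightarrow> gauss_term (Suc N) k = gauss_term N k + fps_X ^ Suc N * gauss_term N (partner N k)"
  by (cases "even (N - k)") (simp_all add: partner_def gauss_term_Suc_even_gap gauss_term_Suc_odd_gap)

lemma sum_gauss_term_Suc:
  "(\<Sum>k\<le>Suc N. gauss_term (Suc N) k)
     = (\<Sum>k\<le>N. gauss_term N k + fps_X ^ Suc N * gauss_term N (partner N k))"
proof -
  have top: "gauss_term (Suc N) (Suc N) = fps_X ^ Suc N * gauss_term N (partner N N)"
    by (simp add: gauss_term_def partner_def tri_Suc power_add)
  have diag: "gauss_term (Suc N) N = gauss_term N N"
    by (simp add: gauss_term_def)
  show ?thesis
    by (simp add: top diag gauss_term_Suc lessThan_Suc_atMost[symmetric] partner_def)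
qed

lemma prod_one_plus_X_power_eq_sum_gauss_term:
  "(\<Prod>j=1..N. 1 + fps_X ^ j) = (\<Sum>k\<le>N. gauss_term N k)"
proof (induction N)
  case 0
  show ?case by (simp add: gauss_term_def)
next
  case (Suc N)
  have "(\<Prod>j=1..Suc N. 1 + fps_X ^ j) = (\<Sum>k\<le>N. gauss_term N k) * (1 + fps_X ^ Suc N)"
    using Suc.IH by simp
  also have "\<dots> = (\<Sum>k\<le>N. gauss_term N k) + fps_X ^ Suc N * (\<Sum>k\<le>N. gauss_term N (partner N k))"
    using sum.reindex_bij_betw[OF bij_betw_partner, of "gauss_term N" N] by (simp add: algebra_simps)
  also have "\<dots> = (\<Sum>k\<le>Suc N. gauss_term (Suc N) k)"
    unfolding sum_gauss_term_Suc by (simp add: sum.distrib sum_distrib_left)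
  finally show ?case .
qed

lemma gauss_term_nth:
  assumes "n \<le> N"
  shows "gauss_term N k $ n
           = (if tri k \<le> n \<and> even (n - tri k) then int (p ((n - tri k) div 2)) else 0)"
proof -
  define a where "a = (N - k) div 2"
  have coeff: "gauss_term N k $ n = (if n < tri k then 0 else q_binomial (fps_X ^ 2) N a $ (n - tri k))"
    unfolding gauss_term_def a_def by (rule fps_X_power_mult_nth)
  show ?thesis
  proof (cases "tri k \<le> n \<and> even (n - tri k)")
    case True
    define m where "m = (n - tri k) div 2"
    have "n - tri k = 2 * m"
      unfolding m_def by (rule even_two_times_div_two[symmetric]) (use True in blast)
    moreover have "m \<le> a"
      using True le_tri[of k] assms unfolding m_def a_def by (intro div_le_mono) linarith
    moreover have "a \<le> N - a" "a \<le> N" unfolding a_def by linarith+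
    ultimately have "gauss_term N k $ n = partition_fps {1..a} $ m"
      using coeff True q_binomial_X_power_nth_partition_fps[of 2 m "N - a" a] by simp
    also have "\<dots> = int (p m)"
      using \<open>m \<le> a\<close> by (rule p_eq_partition_fps_nth[symmetric])
    finally show ?thesis
      unfolding m_def by (subst if_P[OF True])
  next
    case False
    then show ?thesis
      using coeff q_binomial_X_power_nth_eq_0[of 2 "n - tri k"] by auto
  qed
qed

lemma p_d_eq_sum_triangular:
  "p_d n = (\<Sum>t\<in>{t. t \<le> n \<and> triangular t \<and> even (n - t)}. p ((n - t) div 2))"
proof -
  define K where "K = {k\<in>{..n}. tri k \<le> n \<and> even (n - tri k)}"
  have image: "tri ` K = {t. t \<le> n \<and> triangular t \<and> even (n - t)}"
    unfolding K_def triangular_iff_in_range_tri using le_tri order_trans by blast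
  have "int (p_d n) = (\<Sum>k\<le>n. gauss_term n k $ n)"
    using p_d_eq_prod_nth[of n n] unfolding prod_one_plus_X_power_eq_sum_gauss_term
    by (simp add: fps_sum_nth)
  also have "\<dots> = (\<Sum>k\<le>n. if tri k \<le> n \<and> even (n - tri k) then int (p ((n - tri k) div 2)) else 0)"
    by (rule sum.cong) (simp_all add: gauss_term_nth)
  also have "\<dots> = (\<Sum>k\<in>K. int (p ((n - tri k) div 2)))"
    unfolding K_def by (rule sum.inter_filter[symmetric]) simp
  also have "\<dots> = (\<Sum>t\<in>tri ` K. int (p ((n - t) div 2)))"
    using strict_mono_imp_inj_on[OF strict_mono_tri] by (simp add: sum.reindex)
  finally have "int (p_d n) = int (\<Sum>t\<in>tri ` K. p ((n - t) div 2))"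
    by simp
  then show ?thesis unfolding image by (simp only: of_nat_eq_iff)
qed

theorem theorem1:
  shows "(\<forall>n::nat. n \<ge> 1 \<longrightarrow> even n \<longrightarrow>
            (\<Sum>t\<in>{t. t \<le> n \<and> triangular t \<and> even t}. p ((n - t) div 2)) = p_d n)
       \<and> (\<forall>n::nat. n \<ge> 1 \<longrightarrow> odd n \<longrightarrow>
            (\<Sum>t\<in>{t. t \<le> n \<and> triangular t \<and> odd t}. p ((n - t) div 2)) = p_o n)"
proof (intro conjI allI impI)
  fix n :: nat
  assume "even n"
  then have "{t. t \<le> n \<and> triangular t \<and> even t} = {t. t \<le> n \<and> triangular t \<and> even (n - t)}"
    by (auto simp: even_diff_nat)
  then show "(\<Sum>t\<in>{t. t \<le> n \<and> triangular t \<and> even t}. p ((n - t) div 2)) = p_d n"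
    by (simp add: p_d_eq_sum_triangular)
next
  fix n :: nat
  assume "odd n"
  then have "{t. t \<le> n \<and> triangular t \<and> odd t} = {t. t \<le> n \<and> triangular t \<and> even (n - t)}"
    by (auto simp: even_diff_nat)
  then show "(\<Sum>t\<in>{t. t \<le> n \<and> triangular t \<and> odd t}. p ((n - t) div 2)) = p_o n"
    by (simp add: p_d_eq_sum_triangular p_o_eq_p_d)
qed

end
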